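(* Let $G$ be a cubic graph. If $G=G_1\,H\,G_2$ or $G=G_1\,Y\,G_2$, then $G$ is bipartite if and only if $G_1$ and $G_2$ are both bipartite.
   Context: Graphs are finite; multiple edges allowed, loops not. For cubic graphs $G_1,G_2$: $G_1\,Y\,G_2$ is obtained by choosing a vertex $v_1\in G_1$ with neighbors (via its three incident edges) $s_{11},s_{12},s_{13}$ and a vertex $v_2\in G_2$ with neighbors $s_{21},s_{22},s_{23}$, deleting $v_1,v_2$, and adding edges $s_{1j}s_{2j}$ ($j=1,2,3$); equivalently, $G=G_1\,Y\,G_2$ means $G$ has a $3$-edge cut whose two sides, each completed by a new vertex joined to the three cut endpoints on that side, are $G_1$ and $G_2$. $G_1\,H\,G_2$ is obtained by choosing edges $s_{11}s_{12}\in G_1$ and $s_{21}s_{22}\in G_2$, deleting them and adding $s_{11}s_{21}$, $s_{12}s_{22}$; equivalently, $G$ has a $2$-edge cut whose two sides, each completed by an edge joining the two cut endpoints on that side, are $G_1$ and $G_2$. In the decomposition direction the cuts are nontrivial, i.e. $G_1$ and $G_2$ each have fewer vertices than $G$. *)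

theory Defs
  imports Main
begin

text \<open>Finite multigraphs without loops: a vertex set, a set of edge identifiers,
  and for each edge its set of (exactly two, distinct) endpoints.\<close>

record ('v, 'e) mgraph =
  verts :: "'v set"
  edges :: "'e set"
  ends  :: "'e \<Rightarrow> 'v set"

definition wf_mgraph :: "('v, 'e) mgraph \<Rightarrow> bool" where
  "wf_mgraph G \<longleftrightarrow> finite (verts G) \<and> finite (edges G) \<and>
     (\<forall>e\<in>edges G. ends G e \<subseteq> verts G \<and> card (ends G e) = 2)"

definition incident_edges :: "('v, 'e) mgraph \<Rightarrow> 'v \<Rightarrow> 'e set" where
  "incident_edges G v = {e \<in> edges G. v \<in> ends G e}"

definition degree :: "('v, 'e) mgraph \<Rightarrow> 'v \<Rightarrow> nat" where
  "degree G v = card (incident_edges G v)"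

definition cubic :: "('v, 'e) mgraph \<Rightarrow> bool" where
  "cubic G \<longleftrightarrow> wf_mgraph G \<and> (\<forall>v\<in>verts G. degree G v = 3)"

definition bipartite :: "('v, 'e) mgraph \<Rightarrow> bool" where
  "bipartite G \<longleftrightarrow> (\<exists>c :: 'v \<Rightarrow> bool. \<forall>e\<in>edges G. \<forall>x\<in>ends G e. \<forall>y\<in>ends G e.
       x \<noteq> y \<longrightarrow> c x \<noteq> c y)"

definition mg_iso :: "('v, 'e) mgraph \<Rightarrow> ('w, 'f) mgraph \<Rightarrow> bool" where
  "mg_iso G G' \<longleftrightarrow> (\<exists>f g. bij_betw f (verts G) (verts G') \<and> bij_betw g (edges G) (edges G') \<and>
       (\<forall>e\<in>edges G. ends G' (g e) = f ` ends G e))"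

definition other_end :: "('v, 'e) mgraph \<Rightarrow> 'v \<Rightarrow> 'e \<Rightarrow> 'v" where
  "other_end G v e = the_elem (ends G e - {v})"

definition H_op :: "('v1, 'e1) mgraph \<Rightarrow> 'v1 \<Rightarrow> 'v1 \<Rightarrow> 'e1 \<Rightarrow>
                    ('v2, 'e2) mgraph \<Rightarrow> 'v2 \<Rightarrow> 'v2 \<Rightarrow> 'e2 \<Rightarrow>
                    ('v1 + 'v2, 'e1 + 'e2 + bool) mgraph" where
  "H_op G1 x1 y1 a G2 x2 y2 b =
    \<lparr> verts = Inl ` verts G1 \<union> Inr ` verts G2,
      edges = Inl ` (edges G1 - {a}) \<union> Inr ` Inl ` (edges G2 - {b}) \<union> {Inr (Inr True), Inr (Inr False)},
      ends = (\<lambda>e. case e of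
                Inl e1 \<Rightarrow> Inl ` ends G1 e1
              | Inr (Inl e2) \<Rightarrow> Inr ` ends G2 e2
              | Inr (Inr True) \<Rightarrow> {Inl x1, Inr x2}
              | Inr (Inr False) \<Rightarrow> {Inl y1, Inr y2}) \<rparr>"

definition H_valid :: "('v1, 'e1) mgraph \<Rightarrow> 'v1 \<Rightarrow> 'v1 \<Rightarrow> 'e1 \<Rightarrow>
                       ('v2, 'e2) mgraph \<Rightarrow> 'v2 \<Rightarrow> 'v2 \<Rightarrow> 'e2 \<Rightarrow> bool" where
  "H_valid G1 x1 y1 a G2 x2 y2 b \<longleftrightarrow>
     a \<in> edges G1 \<and> ends G1 a = {x1, y1} \<and> b \<in> edges G2 \<and> ends G2 b = {x2, y2}"

definition Y_op :: "('v1, 'e1) mgraph \<Rightarrow> 'v1 \<Rightarrow> (nat \<Rightarrow> 'e1) \<Rightarrow>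
                    ('v2, 'e2) mgraph \<Rightarrow> 'v2 \<Rightarrow> (nat \<Rightarrow> 'e2) \<Rightarrow>
                    ('v1 + 'v2, 'e1 + 'e2 + nat) mgraph" where
  "Y_op G1 v1 f1 G2 v2 f2 =
    \<lparr> verts = Inl ` (verts G1 - {v1}) \<union> Inr ` (verts G2 - {v2}),
      edges = Inl ` (edges G1 - incident_edges G1 v1) \<union> Inr ` Inl ` (edges G2 - incident_edges G2 v2)
              \<union> Inr ` Inr ` {0..<3},
      ends = (\<lambda>e. case e of
                Inl e1 \<Rightarrow> Inl ` ends G1 e1
              | Inr (Inl e2) \<Rightarrow> Inr ` ends G2 e2
              | Inr (Inr j) \<Rightarrow> {Inl (other_end G1 v1 (f1 j)), Inr (other_end G2 v2 (f2 j))}) \<rparr>"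

definition Y_valid :: "('v1, 'e1) mgraph \<Rightarrow> 'v1 \<Rightarrow> (nat \<Rightarrow> 'e1) \<Rightarrow>
                       ('v2, 'e2) mgraph \<Rightarrow> 'v2 \<Rightarrow> (nat \<Rightarrow> 'e2) \<Rightarrow> bool" where
  "Y_valid G1 v1 f1 G2 v2 f2 \<longleftrightarrow>
     v1 \<in> verts G1 \<and> bij_betw f1 {0..<3} (incident_edges G1 v1) \<and>
     v2 \<in> verts G2 \<and> bij_betw f2 {0..<3} (incident_edges G2 v2)"

definition is_H_sum :: "('v, 'e) mgraph \<Rightarrow> ('v1, 'e1) mgraph \<Rightarrow> ('v2, 'e2) mgraph \<Rightarrow> bool" where
  "is_H_sum G G1 G2 \<longleftrightarrow> cubic G1 \<and> cubic G2 \<and>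
     (\<exists>x1 y1 a x2 y2 b. H_valid G1 x1 y1 a G2 x2 y2 b \<and> mg_iso G (H_op G1 x1 y1 a G2 x2 y2 b))"

definition is_Y_sum :: "('v, 'e) mgraph \<Rightarrow> ('v1, 'e1) mgraph \<Rightarrow> ('v2, 'e2) mgraph \<Rightarrow> bool" where
  "is_Y_sum G G1 G2 \<longleftrightarrow> cubic G1 \<and> cubic G2 \<and>
     (\<exists>v1 f1 v2 f2. Y_valid G1 v1 f1 G2 v2 f2 \<and> mg_iso G (Y_op G1 v1 f1 G2 v2 f2))"

end

theory Submission
  imports Defs
begin

text \<open>Give the colours of a 2-colouring the weights \<open>+1\<close> and \<open>-1\<close> and add up, over all edges, the
  weights of their two ends. In a cubic graph every vertex is counted three times, and a properly
  coloured edge contributes \<open>0\<close>; hence if a colouring is proper on all edges outside a set \<open>S\<close>,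
  the contribution of \<open>S\<close> is divisible by 3. For an H-decomposition, the colouring of \<open>G\<close> restricted
  to \<open>G\<^sub>i\<close> is proper except possibly on the reinserted edge, which would contribute \<open>\<plusminus>2\<close>. For a
  Y-decomposition it is proper except on the three edges at the new vertex, whose other ends
  contribute a multiple of 3 and therefore have equal colours, so the new vertex can be given the
  opposite colour. Conversely, colourings of \<open>G\<^sub>1\<close> and \<open>G\<^sub>2\<close> combine to one of \<open>G\<close> after possibly
  swapping the two colours of \<open>G\<^sub>2\<close>.\<close>

definition proper_on :: "('v, 'e) mgraph \<Rightarrow> 'e set \<Rightarrow> ('v \<Rightarrow> bool) \<Rightarrow> bool" where
  "proper_on G E c \<longleftrightarrow> (\<forall>e\<in>E. \<forall>x\<in>ends G e. \<forall>y\<in>ends G e. x \<noteq> y \<longrightarrow> c x \<noteq> c y)"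

lemma bipartite_iff_proper_on: "bipartite G \<longleftrightarrow> (\<exists>c. proper_on G (edges G) c)"
  by (simp add: bipartite_def proper_on_def)

lemma proper_onD:
  "proper_on G E c \<Longrightarrow> e \<in> E \<Longrightarrow> x \<in> ends G e \<Longrightarrow> y \<in> ends G e \<Longrightarrow> x \<noteq> y \<Longrightarrow> c x \<noteq> c y"
  unfolding proper_on_def by blast

lemma proper_on_Un: "proper_on G (A \<union> B) c \<longleftrightarrow> proper_on G A c \<and> proper_on G B c"
  by (auto simp: proper_on_def)

lemma proper_on_mono: "proper_on G B c \<Longrightarrow> A \<subseteq> B \<Longrightarrow> proper_on G A c"
  by (auto simp: proper_on_def)

lemma proper_on_flip: "proper_on G E c \<Longrightarrow> proper_on G E (\<lambda>w. c w = k)"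
  unfolding proper_on_def by blast

lemma proper_on_prescribe:
  assumes "proper_on G E c"
  obtains c' where "proper_on G E c'" and "c' u = b"
proof (rule that)
  show "proper_on G E (\<lambda>w. c w = (c u = b))"
    using assms by (rule proper_on_flip)
qed blast

lemma proper_on_cong:
  assumes "\<And>e u. e \<in> E \<Longrightarrow> u \<in> ends G e \<Longrightarrow> c u = d u"
  shows "proper_on G E c \<longleftrightarrow> proper_on G E d"
  using assms by (auto simp: proper_on_def)

lemma proper_on_image:
  assumes "\<And>e. e \<in> E \<Longrightarrow> ends G' (g e) = f ` ends G e"
    and "\<And>e. e \<in> E \<Longrightarrow> inj_on f (ends G e)"
  shows "proper_on G' (g ` E) c \<longleftrightarrow> proper_on G E (c \<circ> f)"
proof -
  have "(\<forall>x\<in>f ` ends G e. \<forall>y\<in>f ` ends G e. x \<noteq> y \<longrightarrow> c x \<noteq> c y) \<longleftrightarrow>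
      (\<forall>x\<in>ends G e. \<forall>y\<in>ends G e. x \<noteq> y \<longrightarrow> c (f x) \<noteq> c (f y))" if "e \<in> E" for e
    using inj_on_eq_iff[OF assms(2)[OF that]] by blast
  then show ?thesis
    using assms(1) by (simp add: proper_on_def)
qed

lemma wf_mgraph_endsE:
  assumes "wf_mgraph G" and "e \<in> edges G"
  obtains x y where "ends G e = {x, y}" and "x \<noteq> y"
proof -
  have "card (ends G e) = 2"
    using assms by (simp add: wf_mgraph_def)
  then show thesis
    using that by (auto simp: card_2_iff)
qed

lemma wf_mgraph_ends_distinct:
  assumes "wf_mgraph G" and "e \<in> edges G" and "ends G e = {x, y}"
  shows "x \<noteq> y"
proof
  assume "x = y"
  then have "card (ends G e) = 1"
    using assms(3) by simp
  moreover have "card (ends G e) = 2"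
    using assms(1,2) by (simp add: wf_mgraph_def)
  ultimately show False
    by simp
qed

lemma ends_other_end:
  assumes "wf_mgraph G" and "e \<in> incident_edges G v"
  shows "ends G e = {v, other_end G v e}" and "other_end G v e \<noteq> v"
proof -
  have "e \<in> edges G" and "v \<in> ends G e"
    using assms(2) by (auto simp: incident_edges_def)
  moreover obtain x y where "ends G e = {x, y}" and "x \<noteq> y"
    using assms(1) \<open>e \<in> edges G\<close> by (rule wf_mgraph_endsE)
  ultimately obtain w where "ends G e = {v, w}" and "w \<noteq> v"
    by (metis insert_commute insertE singletonD)
  moreover have "other_end G v e = w"
    using calculation by (simp add: other_end_def insert_Diff_if)
  ultimately show "ends G e = {v, other_end G v e}" and "other_end G v e \<noteq> v"
    by simp_all
qed

lemma proper_on_other_end: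
  assumes "wf_mgraph G" and "proper_on G (edges G) c" and "e \<in> incident_edges G v"
  shows "c (other_end G v e) \<longleftrightarrow> \<not> c v"
proof -
  have "e \<in> edges G"
    using assms(3) by (simp add: incident_edges_def)
  then show ?thesis
    using ends_other_end[OF assms(1,3)] proper_onD[OF assms(2)] by blast
qed

lemma sum_degree_weighted:
  fixes f :: "'v \<Rightarrow> 'a :: comm_semiring_1"
  assumes "wf_mgraph G"
  shows "(\<Sum>u\<in>verts G. of_nat (degree G u) * f u) = (\<Sum>e\<in>edges G. \<Sum>u\<in>ends G e. f u)"
proof -
  have fin: "finite (verts G)" "finite (edges G)" and sub: "\<And>e. e \<in> edges G \<Longrightarrow> ends G e \<subseteq> verts G"
    using assms by (auto simp: wf_mgraph_def)
  have "(\<Sum>u\<in>verts G. of_nat (degree G u) * f u) = (\<Sum>u\<in>verts G. \<Sum>e\<in>{e. e \<in> edges G \<and> u \<in> ends G e}. f u)"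
    by (simp add: degree_def incident_edges_def)
  also have "\<dots> = (\<Sum>e\<in>edges G. \<Sum>u\<in>{u. u \<in> verts G \<and> u \<in> ends G e}. f u)"
    using fin by (rule sum.swap_restrict)
  also have "\<dots> = (\<Sum>e\<in>edges G. \<Sum>u\<in>ends G e. f u)"
    using sub by (intro sum.cong refl) blast
  finally show ?thesis .
qed
definition spin :: "bool \<Rightarrow> int" where
  "spin b = (if b then 1 else -1)"

lemma spin_add_spin_eq_0_iff: "spin a + spin b = 0 \<longleftrightarrow> a \<noteq> b"
  by (simp add: spin_def)

lemma three_dvd_spin_add_imp_ne: "3 dvd spin a + spin b \<Longrightarrow> a \<noteq> b"
  by (cases a; cases b) (simp_all add: spin_def)

lemma three_dvd_spin_sum_imp_eq: "3 dvd spin a + spin b + spin c \<Longrightarrow> b = a \<and> c = a"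
  by (cases a; cases b; cases c) (simp_all add: spin_def)

lemma cubic_three_dvd_improper_sum:
  assumes "cubic G" and "S \<subseteq> edges G" and "proper_on G (edges G - S) c"
  shows "3 dvd (\<Sum>e\<in>S. \<Sum>u\<in>ends G e. spin (c u))"
proof -
  have wf: "wf_mgraph G" and deg: "\<And>u. u \<in> verts G \<Longrightarrow> degree G u = 3"
    using assms(1) by (auto simp: cubic_def)
  have proper_zero: "(\<Sum>u\<in>ends G e. spin (c u)) = 0" if e: "e \<in> edges G - S" for e
  proof -
    obtain x y where "ends G e = {x, y}" and "x \<noteq> y"
      using wf e by (auto elim: wf_mgraph_endsE)
    moreover have "c x \<noteq> c y"
      using proper_onD[OF assms(3) e] calculation by simp
    ultimately show ?thesis
      by (simp add: spin_add_spin_eq_0_iff)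
  qed
  have "3 * (\<Sum>u\<in>verts G. spin (c u)) = (\<Sum>u\<in>verts G. of_nat (degree G u) * spin (c u))"
    by (simp add: deg sum_distrib_left)
  also have "\<dots> = (\<Sum>e\<in>edges G. \<Sum>u\<in>ends G e. spin (c u))"
    using wf by (rule sum_degree_weighted)
  also have "\<dots> = (\<Sum>e\<in>edges G - S. \<Sum>u\<in>ends G e. spin (c u)) + (\<Sum>e\<in>S. \<Sum>u\<in>ends G e. spin (c u))"
    using assms(2) wf by (intro sum.subset_diff) (auto simp: wf_mgraph_def)
  also have "\<dots> = (\<Sum>e\<in>S. \<Sum>u\<in>ends G e. spin (c u))"
    by (simp add: proper_zero)
  finally show ?thesis
    by (metis dvd_triv_left)
qed

lemma cubic_proper_on_insert_edge:
  assumes "cubic G" and "a \<in> edges G" and "proper_on G (edges G - {a}) c"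
  shows "proper_on G (edges G) c"
proof -
  obtain x y where ends_a: "ends G a = {x, y}" and "x \<noteq> y"
    using assms(1,2) by (auto simp: cubic_def elim: wf_mgraph_endsE)
  have "3 dvd spin (c x) + spin (c y)"
    using cubic_three_dvd_improper_sum[OF assms(1) _ assms(3)] assms(2) ends_a \<open>x \<noteq> y\<close> by simp
  then have "c x \<noteq> c y"
    by (rule three_dvd_spin_add_imp_ne)
  then have "proper_on G {a} c"
    using ends_a by (auto simp: proper_on_def)
  then show ?thesis
    using assms(2,3) proper_on_Un[of G "edges G - {a}" "{a}" c] by (simp add: insert_absorb)
qed

lemma cubic_other_ends_same_colour:
  assumes "cubic G" and "v \<in> verts G" and "proper_on G (edges G - incident_edges G v) c"
  obtains b where "\<forall>e\<in>incident_edges G v. c (other_end G v e) = b"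
proof -
  let ?I = "incident_edges G v" and ?w = "other_end G v"
  have wf: "wf_mgraph G" and "card ?I = 3"
    using assms(1,2) by (auto simp: cubic_def degree_def)
  then obtain e1 e2 e3 where I: "?I = {e1, e2, e3}" and "e1 \<noteq> e2" "e2 \<noteq> e3" "e1 \<noteq> e3"
    by (auto simp: card_3_iff)
  have "(\<Sum>e\<in>?I. \<Sum>u\<in>ends G e. spin (c u)) = (\<Sum>e\<in>?I. spin (c v) + spin (c (?w e)))"
    using ends_other_end(1)[OF wf] ends_other_end(2)[OF wf, THEN not_sym] by (intro sum.cong) simp_all
  also have "\<dots> = 3 * spin (c v) + (\<Sum>e\<in>?I. spin (c (?w e)))"
    by (simp add: sum.distrib \<open>card ?I = 3\<close>)
  moreover have "3 dvd (\<Sum>e\<in>?I. \<Sum>u\<in>ends G e. spin (c u))"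
    using assms(3) by (intro cubic_three_dvd_improper_sum[OF assms(1)]) (auto simp: incident_edges_def)
  ultimately have "3 dvd (\<Sum>e\<in>?I. spin (c (?w e)))"
    by (simp add: dvd_add_right_iff)
  then have "3 dvd spin (c (?w e1)) + spin (c (?w e2)) + spin (c (?w e3))"
    using I \<open>e1 \<noteq> e2\<close> \<open>e2 \<noteq> e3\<close> \<open>e1 \<noteq> e3\<close> by (simp add: add.assoc)
  then have "c (?w e2) = c (?w e1)" and "c (?w e3) = c (?w e1)"
    by (auto dest: three_dvd_spin_sum_imp_eq)
  then show thesis
    using I that[of "c (?w e1)"] by auto
qed

lemma proper_on_recolour_vertex:
  assumes "wf_mgraph G" and "proper_on G (edges G - incident_edges G v) c"
    and "\<forall>e\<in>incident_edges G v. c (other_end G v e) = b"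
  shows "proper_on G (edges G) (c(v := \<not> b))"
  unfolding proper_on_def
proof (intro ballI impI)
  fix e x y assume e: "e \<in> edges G" and "x \<in> ends G e" "y \<in> ends G e" "x \<noteq> y"
  show "(c(v := \<not> b)) x \<noteq> (c(v := \<not> b)) y"
  proof (cases "e \<in> incident_edges G v")
    case True
    then show ?thesis
      using ends_other_end[OF assms(1) True] assms(3) \<open>x \<in> ends G e\<close> \<open>y \<in> ends G e\<close> \<open>x \<noteq> y\<close>
      by auto
  next
    case False
    then have "v \<notin> ends G e" and "c x \<noteq> c y"
      using e assms(2) \<open>x \<in> ends G e\<close> \<open>y \<in> ends G e\<close> \<open>x \<noteq> y\<close>
      by (auto simp: incident_edges_def proper_on_def)
    then show ?thesis
      using \<open>x \<in> ends G e\<close> \<open>y \<in> ends G e\<close> by auto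
  qed
qed

lemma cubic_bipartite_if_proper_off_vertex:
  assumes "cubic G" and "v \<in> verts G" and "proper_on G (edges G - incident_edges G v) c"
  shows "bipartite G"
proof -
  obtain b where "\<forall>e\<in>incident_edges G v. c (other_end G v e) = b"
    using cubic_other_ends_same_colour[OF assms] .
  then have "proper_on G (edges G) (c(v := \<not> b))"
    using assms(1,3) by (intro proper_on_recolour_vertex) (auto simp: cubic_def)
  then show ?thesis
    by (auto simp: bipartite_iff_proper_on)
qed

lemma mg_iso_bipartite_iff:
  assumes "wf_mgraph G" and "mg_iso G G'"
  shows "bipartite G \<longleftrightarrow> bipartite G'"
proof -
  obtain f g where f: "bij_betw f (verts G) (verts G')" and g: "bij_betw g (edges G) (edges G')"
    and ends_g: "\<And>e. e \<in> edges G \<Longrightarrow> ends G' (g e) = f ` ends G e"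
    using assms(2) by (auto simp: mg_iso_def)
  have ends_sub: "\<And>e. e \<in> edges G \<Longrightarrow> ends G e \<subseteq> verts G"
    using assms(1) by (auto simp: wf_mgraph_def)
  have inj: "inj_on f (verts G)"
    using f by (rule bij_betw_imp_inj_on)
  have transfer: "proper_on G' (edges G') c \<longleftrightarrow> proper_on G (edges G) (c \<circ> f)" for c
    using proper_on_image[of "edges G" G' g f G c] ends_g ends_sub inj_on_subset[OF inj]
      bij_betw_imp_surj_on[OF g] by auto
  have "proper_on G (edges G) (d \<circ> inv_into (verts G) f \<circ> f) \<longleftrightarrow> proper_on G (edges G) d" for d
    using ends_sub inv_into_f_f[OF inj] by (intro proper_on_cong) (simp add: subset_iff)
  then show ?thesis
    unfolding bipartite_iff_proper_on transfer by blast
qed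

lemma proper_on_H_op:
  "proper_on (H_op G1 x1 y1 a G2 x2 y2 b) (edges (H_op G1 x1 y1 a G2 x2 y2 b)) c \<longleftrightarrow>
     proper_on G1 (edges G1 - {a}) (c \<circ> Inl) \<and> proper_on G2 (edges G2 - {b}) (c \<circ> Inr) \<and>
     c (Inl x1) \<noteq> c (Inr x2) \<and> c (Inl y1) \<noteq> c (Inr y2)"
proof -
  let ?H = "H_op G1 x1 y1 a G2 x2 y2 b"
  have edges: "edges ?H = Inl ` (edges G1 - {a}) \<union> (\<lambda>e. Inr (Inl e)) ` (edges G2 - {b})
      \<union> {Inr (Inr True), Inr (Inr False)}"
    by (auto simp: H_op_def)
  have "proper_on ?H (Inl ` (edges G1 - {a})) c \<longleftrightarrow> proper_on G1 (edges G1 - {a}) (c \<circ> Inl)"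
    by (rule proper_on_image) (simp_all add: H_op_def)
  moreover have "proper_on ?H ((\<lambda>e. Inr (Inl e)) ` (edges G2 - {b})) c \<longleftrightarrow>
      proper_on G2 (edges G2 - {b}) (c \<circ> Inr)"
    by (rule proper_on_image) (simp_all add: H_op_def)
  moreover have "proper_on ?H {Inr (Inr True), Inr (Inr False)} c \<longleftrightarrow>
      c (Inl x1) \<noteq> c (Inr x2) \<and> c (Inl y1) \<noteq> c (Inr y2)"
    by (auto simp: proper_on_def H_op_def)
  ultimately show ?thesis
    unfolding edges proper_on_Un by blast
qed

lemma proper_on_Y_op:
  "proper_on (Y_op G1 v1 f1 G2 v2 f2) (edges (Y_op G1 v1 f1 G2 v2 f2)) c \<longleftrightarrow>
     proper_on G1 (edges G1 - incident_edges G1 v1) (c \<circ> Inl) \<and>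
     proper_on G2 (edges G2 - incident_edges G2 v2) (c \<circ> Inr) \<and>
     (\<forall>j<3. c (Inl (other_end G1 v1 (f1 j))) \<noteq> c (Inr (other_end G2 v2 (f2 j))))"
proof -
  let ?Y = "Y_op G1 v1 f1 G2 v2 f2"
  have edges: "edges ?Y = Inl ` (edges G1 - incident_edges G1 v1)
      \<union> (\<lambda>e. Inr (Inl e)) ` (edges G2 - incident_edges G2 v2) \<union> (\<lambda>j. Inr (Inr j)) ` {..<3}"
    by (auto simp: Y_op_def)
  have "proper_on ?Y (Inl ` (edges G1 - incident_edges G1 v1)) c \<longleftrightarrow>
      proper_on G1 (edges G1 - incident_edges G1 v1) (c \<circ> Inl)"
    by (rule proper_on_image) (simp_all add: Y_op_def)
  moreover have "proper_on ?Y ((\<lambda>e. Inr (Inl e)) ` (edges G2 - incident_edges G2 v2)) c \<longleftrightarrow>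
      proper_on G2 (edges G2 - incident_edges G2 v2) (c \<circ> Inr)"
    by (rule proper_on_image) (simp_all add: Y_op_def)
  moreover have "proper_on ?Y ((\<lambda>j. Inr (Inr j)) ` {..<3}) c \<longleftrightarrow>
      (\<forall>j<3. c (Inl (other_end G1 v1 (f1 j))) \<noteq> c (Inr (other_end G2 v2 (f2 j))))"
    by (auto simp: proper_on_def Y_op_def)
  ultimately show ?thesis
    unfolding edges proper_on_Un by blast
qed

lemma H_op_bipartite_iff:
  assumes "cubic G1" and "cubic G2" and "H_valid G1 x1 y1 a G2 x2 y2 b"
  shows "bipartite (H_op G1 x1 y1 a G2 x2 y2 b) \<longleftrightarrow> bipartite G1 \<and> bipartite G2"
proof
  let ?H = "H_op G1 x1 y1 a G2 x2 y2 b"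
  have a: "a \<in> edges G1" "ends G1 a = {x1, y1}" and b: "b \<in> edges G2" "ends G2 b = {x2, y2}"
    using assms(3) by (auto simp: H_valid_def)
  {
    assume "bipartite ?H"
    then obtain c where "proper_on ?H (edges ?H) c"
      by (auto simp: bipartite_iff_proper_on)
    then have "proper_on G1 (edges G1) (c \<circ> Inl)" and "proper_on G2 (edges G2) (c \<circ> Inr)"
      using cubic_proper_on_insert_edge[OF assms(1) a(1)] cubic_proper_on_insert_edge[OF assms(2) b(1)]
      by (simp_all add: proper_on_H_op)
    then show "bipartite G1 \<and> bipartite G2"
      by (auto simp: bipartite_iff_proper_on)
  next
    assume "bipartite G1 \<and> bipartite G2"
    then obtain d1 d2 where d1: "proper_on G1 (edges G1) d1" and d2: "proper_on G2 (edges G2) d2"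
      by (auto simp: bipartite_iff_proper_on)
    obtain d2' where d2': "proper_on G2 (edges G2) d2'" and "d2' x2 \<longleftrightarrow> \<not> d1 x1"
      using proper_on_prescribe[OF d2] .
    moreover have "x1 \<noteq> y1" and "x2 \<noteq> y2"
      using a b assms(1,2) by (auto simp: cubic_def dest: wf_mgraph_ends_distinct)
    ultimately have "d1 y1 \<longleftrightarrow> \<not> d1 x1" and "d2' y2 \<longleftrightarrow> d1 x1"
      using proper_onD[OF d1 a(1)] proper_onD[OF d2' b(1)] a(2) b(2) by blast+
    moreover have "proper_on G1 (edges G1 - {a}) d1" and "proper_on G2 (edges G2 - {b}) d2'"
      using d1 d2' by (auto elim: proper_on_mono)
    ultimately have "proper_on ?H (edges ?H) (case_sum d1 d2')"
      using \<open>d2' x2 \<longleftrightarrow> \<not> d1 x1\<close> by (simp add: proper_on_H_op case_sum_o_inj)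
    then show "bipartite ?H"
      by (auto simp: bipartite_iff_proper_on)
  }
qed

lemma Y_op_bipartite_iff:
  assumes "cubic G1" and "cubic G2" and "Y_valid G1 v1 f1 G2 v2 f2"
  shows "bipartite (Y_op G1 v1 f1 G2 v2 f2) \<longleftrightarrow> bipartite G1 \<and> bipartite G2"
proof
  let ?Y = "Y_op G1 v1 f1 G2 v2 f2"
  have v: "v1 \<in> verts G1" "v2 \<in> verts G2"
    and f: "\<And>j. j < 3 \<Longrightarrow> f1 j \<in> incident_edges G1 v1 \<and> f2 j \<in> incident_edges G2 v2"
    using assms(3) by (auto simp: Y_valid_def bij_betw_def)
  have wf: "wf_mgraph G1" "wf_mgraph G2"
    using assms(1,2) by (simp_all add: cubic_def)
  {
    assume "bipartite ?Y"
    then obtain c where "proper_on ?Y (edges ?Y) c"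
      by (auto simp: bipartite_iff_proper_on)
    then show "bipartite G1 \<and> bipartite G2"
      using cubic_bipartite_if_proper_off_vertex[OF assms(1) v(1)]
        cubic_bipartite_if_proper_off_vertex[OF assms(2) v(2)]
      by (auto simp: proper_on_Y_op)
  next
    assume "bipartite G1 \<and> bipartite G2"
    then obtain d1 d2 where d1: "proper_on G1 (edges G1) d1" and d2: "proper_on G2 (edges G2) d2"
      by (auto simp: bipartite_iff_proper_on)
    obtain d2' where d2': "proper_on G2 (edges G2) d2'" and "d2' v2 \<longleftrightarrow> \<not> d1 v1"
      using proper_on_prescribe[OF d2] .
    then have "d1 (other_end G1 v1 (f1 j)) \<noteq> d2' (other_end G2 v2 (f2 j))" if "j < 3" for j
      using proper_on_other_end[OF wf(1) d1] proper_on_other_end[OF wf(2) d2'] f[OF that] by blast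
    moreover have "proper_on G1 (edges G1 - incident_edges G1 v1) d1"
      and "proper_on G2 (edges G2 - incident_edges G2 v2) d2'"
      using d1 d2' by (auto elim: proper_on_mono)
    ultimately have "proper_on ?Y (edges ?Y) (case_sum d1 d2')"
      by (simp add: proper_on_Y_op case_sum_o_inj)
    then show "bipartite ?Y"
      by (auto simp: bipartite_iff_proper_on)
  }
qed

theorem lemma2:
  fixes G :: "('v, 'e) mgraph" and G1 :: "('v1, 'e1) mgraph" and G2 :: "('v2, 'e2) mgraph"
  assumes "cubic G"
    and "is_H_sum G G1 G2 \<or> is_Y_sum G G1 G2"
  shows "bipartite G \<longleftrightarrow> bipartite G1 \<and> bipartite G2"
proof -
  have wf: "wf_mgraph G"
    using assms(1) by (simp add: cubic_def)
  from assms(2) show ?thesis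
  proof
    assume "is_H_sum G G1 G2"
    then obtain x1 y1 a x2 y2 b where cubic1: "cubic G1" and cubic2: "cubic G2"
      and valid: "H_valid G1 x1 y1 a G2 x2 y2 b" and iso: "mg_iso G (H_op G1 x1 y1 a G2 x2 y2 b)"
      by (auto simp: is_H_sum_def)
    show ?thesis
      using mg_iso_bipartite_iff[OF wf iso] H_op_bipartite_iff[OF cubic1 cubic2 valid] by simp
  next
    assume "is_Y_sum G G1 G2"
    then obtain v1 f1 v2 f2 where cubic1: "cubic G1" and cubic2: "cubic G2"
      and valid: "Y_valid G1 v1 f1 G2 v2 f2" and iso: "mg_iso G (Y_op G1 v1 f1 G2 v2 f2)"
      by (auto simp: is_Y_sum_def)
    show ?thesis
      using mg_iso_bipartite_iff[OF wf iso] Y_op_bipartite_iff[OF cubic1 cubic2 valid] by simp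
  qed
qed

end
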